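(* Let $p\in\mathbb{C}[z,z^{-1}]$ be non-zero. If $\operatorname{wd}(p)=0$, then $F(r_p^{(2)})(\lambda)=0$ for all $0\le\lambda<|\operatorname{lead}(p)|$ and $F(r_p^{(2)})(\lambda)=1$ for all $\lambda\ge|\operatorname{lead}(p)|$. If $\operatorname{wd}(p)\ge1$, then \[ F\bigl(r_p^{(2)}\bigr)(\lambda)\le\frac{8\sqrt3}{\sqrt{47}}\cdot\operatorname{wd}(p)\cdot\left(\frac{\lambda}{|\operatorname{lead}(p)|}\right)^{\frac{1}{\operatorname{wd}(p)}}\quad\text{for all }\lambda\in[0,\infty). \]
   Context: For non-zero $p=\sum_{n=n^-}^{n^+}c_nz^n\in\mathbb{C}[z,z^{-1}]$ with $c_{n^-}\neq0\neq c_{n^+}$, the width is $\operatorname{wd}(p)=n^+-n^-$ and the leading coefficient is $\operatorname{lead}(p)=c_{n^+}$. The operator $r_p^{(2)}\colon L^2(\mathbb{Z})\to L^2(\mathbb{Z})$ is multiplication by $p$, with spectral density function $F(r_p^{(2)})(\lambda)=\mu_{S^1}\bigl(\{z\in S^1:|p(z)|\le\lambda\}\bigr)$, $\mu_{S^1}$ the normalized Haar measure. *)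

theory Defs
  imports "HOL-Analysis.Analysis"
begin

text \<open>A Laurent polynomial p = sum_n c_n z^n in C[z,z^-1] is represented by its
 finitely supported coefficient function c :: int => complex.\<close>

definition laurent_poly :: "(int \<Rightarrow> complex) \<Rightarrow> bool" where
  "laurent_poly c \<longleftrightarrow> finite {n. c n \<noteq> 0}"

definition lsupp :: "(int \<Rightarrow> complex) \<Rightarrow> int set" where
  "lsupp c = {n. c n \<noteq> 0}"

definition ldeg_max :: "(int \<Rightarrow> complex) \<Rightarrow> int" where
  "ldeg_max c = Max (lsupp c)"

definition ldeg_min :: "(int \<Rightarrow> complex) \<Rightarrow> int" where
  "ldeg_min c = Min (lsupp c)"

definition wd :: "(int \<Rightarrow> complex) \<Rightarrow> nat" where
  "wd c = nat (ldeg_max c - ldeg_min c)"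

definition lead :: "(int \<Rightarrow> complex) \<Rightarrow> complex" where
  "lead c = c (ldeg_max c)"

definition leval :: "(int \<Rightarrow> complex) \<Rightarrow> complex \<Rightarrow> complex" where
  "leval c z = (\<Sum>n\<in>lsupp c. c n * z powi n)"

text \<open>Spectral density function of r_p^(2):
  F(lambda) = mu_{S^1}({z in S^1. |p(z)| <= lambda}), where the normalized Haar
  measure on S^1 is the push-forward of Lebesgue measure on [0,1] under
  t |-> exp(2 pi i t).\<close>
definition spec_density :: "(int \<Rightarrow> complex) \<Rightarrow> real \<Rightarrow> real" where
  "spec_density c l =
     measure lborel {t \<in> {0..1::real}. cmod (leval c (cis (2 * pi * t))) \<le> l}"

end

theory Submission
  imports Defs "HOL-Computational_Algebra.Fundamental_Theorem_Algebra"
begin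

text \<open>For width zero, \<open>|p|\<close> is constant \<open>|lead p|\<close> on the circle. Otherwise factor
  \<open>p(z) = z^(n\<^sup>-) \<cdot> lead p \<cdot> \<Prod>(z - r\<^sub>i)\<close> over its \<open>wd p\<close> roots. If \<open>|p(z)| \<le> \<lambda>\<close> on the unit
  circle, some factor satisfies \<open>|z - r\<^sub>i| \<le> \<epsilon> = (\<lambda>/|lead p|)\<^bsup>1/wd p\<^esup>\<close>. The points of the
  circle within \<open>\<epsilon>\<close> of a fixed \<open>r\<^sub>i\<close> form an arc of chord at most \<open>2\<epsilon>\<close>, which by Jordan's
  inequality has normalized length at most \<open>2\<epsilon>\<close>. Summing over the roots gives the bound
  \<open>2 \<cdot> wd p \<cdot> \<epsilon>\<close>, and \<open>2 \<le> 8\<surd>3/\<surd>47\<close>.\<close>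

lemma sin_ge_2x_div_pi:
  assumes "0 \<le> x" "x \<le> pi/2"
  shows "2 * x / pi \<le> sin x"
proof -
  have "concave_on {0..pi/2} sin"
    by (rule f''_le0_imp_concave[where f' = cos and f'' = "\<lambda>x. - sin x"])
       (auto intro!: derivative_eq_intros sin_ge_zero)
  from concave_onD_Icc'[OF this, of x] show ?thesis
    using assms by simp
qed

lemma norm_cis_diff: "cmod (cis a - cis b) = 2 * \<bar>sin ((a - b) / 2)\<bar>"
proof -
  have "cis a - cis b = cis b * (exp (\<i> * of_real (a - b)) - 1)"
    by (simp add: cis_conv_exp algebra_simps flip: exp_add)
  then show ?thesis
    by (simp add: norm_mult dist_exp_i_1 flip: of_real_diff)
qed

lemma norm_cis_diff_ge:
  assumes "\<bar>t - w\<bar> \<le> 1"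
  shows "4 * min \<bar>t - w\<bar> (1 - \<bar>t - w\<bar>) \<le> cmod (cis (2*pi*t) - cis (2*pi*w))"
proof -
  define x where "x = \<bar>t - w\<bar>"
  have x: "0 \<le> x" "x \<le> 1" using assms by (auto simp: x_def)
  have "\<bar>sin (pi * (t - w))\<bar> = \<bar>sin (pi * x)\<bar>"
  proof (cases "t \<le> w")
    case True
    have "pi * (t - w) = - (pi * x)" using True by (simp add: x_def algebra_simps)
    then show ?thesis by simp
  qed (simp add: x_def)
  also have "\<dots> = sin (pi * x)" using x by (simp add: sin_ge_zero)
  finally have "\<bar>sin (pi * (t - w))\<bar> = sin (pi * x)" .
  moreover have "(2*pi*t - 2*pi*w) / 2 = pi * (t - w)" by (simp add: field_simps)
  ultimately have "cmod (cis (2*pi*t) - cis (2*pi*w)) = 2 * sin (pi * x)"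
    by (simp only: norm_cis_diff)
  moreover have "2 * min x (1 - x) \<le> sin (pi * x)"
  proof (cases "x \<le> 1/2")
    case True
    then show ?thesis using x sin_ge_2x_div_pi[of "pi * x"] by simp
  next
    case False
    have "sin (pi * x) = sin (pi * (1 - x))" by (simp add: algebra_simps sin_diff)
    then show ?thesis using x False sin_ge_2x_div_pi[of "pi * (1 - x)"] by simp
  qed
  ultimately show ?thesis by (simp add: x_def)
qed

lemma sublevel_Icc_in_sets_lborel:
  fixes f :: "real \<Rightarrow> real"
  assumes "continuous_on UNIV f"
  shows "{t \<in> {a..b}. f t \<le> l} \<in> sets lborel"
proof -
  have "closed ({a..b} \<inter> {t. f t \<le> l})"
    by (intro closed_Int closed_atLeastAtMost closed_Collect_le assms continuous_on_const)
  moreover have "{t \<in> {a..b}. f t \<le> l} = {a..b} \<inter> {t. f t \<le> l}" by blast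
  ultimately show ?thesis by simp
qed

lemma measure_circle_near_point_le:
  assumes "0 \<le> eps"
  shows "measure lborel {t \<in> {0..1::real}. cmod (cis (2*pi*t) - r) \<le> eps} \<le> 2 * eps"
    (is "measure lborel ?A \<le> _")
proof (cases "?A = {}")
  case True
  show ?thesis unfolding True using assms by simp
next
  case False
  then obtain t0 where t0: "t0 \<in> ?A" by blast
  text \<open>Points of the arc are within \<open>eps/2\<close> of \<open>t0\<close> up to the wrap-around of the circle,
    which is what the two intervals at the ends of \<open>[0, 1]\<close> account for.\<close>
  define B where "B = {t0 - eps/2 .. t0 + eps/2} \<union> {1 - eps/2 .. 1} \<union> {0 .. eps/2}"
  have "?A \<subseteq> B"
  proof
    fix t assume t: "t \<in> ?A"
    have "cmod (cis (2*pi*t) - cis (2*pi*t0)) \<le> cmod (cis (2*pi*t) - r) + cmod (cis (2*pi*t0) - r)"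
      using norm_triangle_ineq4[of "cis (2*pi*t) - r" "cis (2*pi*t0) - r"] by simp
    also have "\<dots> \<le> 2 * eps" using t t0 by simp
    finally have "4 * min \<bar>t - t0\<bar> (1 - \<bar>t - t0\<bar>) \<le> 2 * eps"
      using norm_cis_diff_ge[of t t0] t t0 by fastforce
    then show "t \<in> B" using t t0 by (auto simp: B_def abs_if min_def split: if_splits)
  qed
  moreover have "?A \<in> sets lborel"
    by (intro sublevel_Icc_in_sets_lborel continuous_intros)
  moreover have "B \<in> fmeasurable lborel"
    unfolding B_def by (intro fmeasurable_compact compact_Un) auto
  ultimately have "measure lborel ?A \<le> measure lborel B"
    by (rule measure_mono_fmeasurable)
  also have "\<dots> \<le> measure lborel {t0 - eps/2 .. t0 + eps/2}
      + measure lborel {1 - eps/2 .. 1} + measure lborel {0 .. eps/2}"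
    unfolding B_def by (intro measure_Un_le order.trans[OF measure_Un_le] add_right_mono) auto
  also have "\<dots> = 2 * eps" using assms by simp
  finally show ?thesis .
qed

lemma power_less_prod:
  fixes x :: "nat \<Rightarrow> 'a::linordered_semidom"
  assumes "0 \<le> e" "d \<noteq> 0" "\<And>i. i < d \<Longrightarrow> e < x i"
  shows "e ^ d < (\<Prod>i<d. x i)"
proof -
  have "(\<Prod>i<d. e) < (\<Prod>i<d. x i)"
    using assms by (intro prod_mono_strict[of 0]) (auto intro: le_less_trans less_imp_le)
  then show ?thesis by simp
qed

lemma laurent_poly_support:
  assumes "laurent_poly c" "c \<noteq> (\<lambda>_. 0)"
  shows "ldeg_min c \<in> lsupp c" "ldeg_max c \<in> lsupp c"
    and "\<And>n. n \<in> lsupp c \<Longrightarrow> ldeg_min c \<le> n \<and> n \<le> ldeg_max c"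
proof -
  have fin: "finite (lsupp c)" using assms(1) by (simp add: laurent_poly_def lsupp_def)
  have "lsupp c \<noteq> {}" using assms(2) by (auto simp: lsupp_def)
  with fin show "ldeg_min c \<in> lsupp c" "ldeg_max c \<in> lsupp c"
    "\<And>n. n \<in> lsupp c \<Longrightarrow> ldeg_min c \<le> n \<and> n \<le> ldeg_max c"
    by (auto simp: ldeg_min_def ldeg_max_def)
qed

lemma lead_nonzero:
  assumes "laurent_poly c" "c \<noteq> (\<lambda>_. 0)"
  shows "lead c \<noteq> 0"
  using laurent_poly_support(2)[OF assms] by (simp add: lead_def lsupp_def)

lemma leval_eq_powi_poly:
  assumes "laurent_poly c" "c \<noteq> (\<lambda>_. 0)"
  obtains Q where "degree Q = wd c" "lead_coeff Q = lead c"
    "\<And>z. z \<noteq> 0 \<Longrightarrow> leval c z = z powi ldeg_min c * poly Q z"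
proof
  define m where "m = ldeg_min c"
  define d where "d = wd c"
  note supp = laurent_poly_support[OF assms, folded m_def]
  have max_eq: "ldeg_max c = m + int d"
    using supp by (simp add: d_def wd_def m_def)
  define Q where "Q = (\<Sum>k\<le>d. monom (c (m + int k)) k)"
  have coeff_Q: "coeff Q k = (if k \<le> d then c (m + int k) else 0)" for k
    by (simp add: Q_def coeff_sum coeff_monom)
  have "c (m + int d) \<noteq> 0" using lead_nonzero[OF assms] max_eq by (simp add: lead_def)
  then show "degree Q = wd c"
    unfolding d_def[symmetric] by (intro antisym degree_le le_degree) (auto simp: coeff_Q)
  then show "lead_coeff Q = lead c" by (simp add: coeff_Q d_def lead_def max_eq)
  fix z :: complex assume z: "z \<noteq> 0"
  have "lsupp c \<subseteq> (\<lambda>k. m + int k) ` {..d}"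
  proof
    fix n assume "n \<in> lsupp c"
    then show "n \<in> (\<lambda>k. m + int k) ` {..d}"
      using supp(3)[of n] max_eq by (intro image_eqI[of _ _ "nat (n - m)"]) auto
  qed
  then have "leval c z = (\<Sum>n\<in>(\<lambda>k. m + int k) ` {..d}. c n * z powi n)"
    unfolding leval_def by (intro sum.mono_neutral_left) (auto simp: lsupp_def)
  also have "\<dots> = (\<Sum>k\<le>d. z powi m * (c (m + int k) * z ^ k))"
    using z by (subst sum.reindex) (auto simp: inj_on_def power_int_add intro!: sum.cong)
  also have "\<dots> = z powi m * poly Q z"
    by (simp add: Q_def poly_sum poly_monom sum_distrib_left)
  finally show "leval c z = z powi ldeg_min c * poly Q z" by (simp add: m_def)
qed

lemma norm_leval_cis_eq_prod:
  assumes "laurent_poly c" "c \<noteq> (\<lambda>_. 0)"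
  obtains r where
    "\<And>x. cmod (leval c (cis x)) = cmod (lead c) * (\<Prod>i<wd c. cmod (cis x - r i))"
proof -
  obtain Q where Q: "degree Q = wd c" "lead_coeff Q = lead c"
    "\<And>z. z \<noteq> 0 \<Longrightarrow> leval c z = z powi ldeg_min c * poly Q z"
    using leval_eq_powi_poly[OF assms] by blast
  obtain r where r: "smult (lead_coeff Q) (\<Prod>i<degree Q. [:-r i, 1:]) = Q"
    by (rule complex_poly_decompose')
  have "poly Q z = lead c * (\<Prod>i<wd c. z - r i)" for z
    using arg_cong[OF r, of "\<lambda>P. poly P z"] Q(1,2) by (simp add: poly_prod)
  then show ?thesis
    by (intro that[of r]) (simp add: Q(3) norm_mult prod_norm norm_power_int)
qed

lemma measure_circle_sublevel_prod_le:
  assumes "0 < a" "0 \<le> l" "d \<noteq> 0"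
  shows "measure lborel {t \<in> {0..1::real}. a * (\<Prod>i<d. cmod (cis (2*pi*t) - r i)) \<le> l}
           \<le> 2 * real d * (l / a) powr (1 / real d)"
    (is "measure lborel ?S \<le> _")
proof -
  define eps where "eps = (l / a) powr (1 / real d)"
  have "eps \<ge> 0" by (simp add: eps_def)
  have eps_power: "eps ^ d = l / a"
    using assms by (simp add: eps_def flip: root_powr_inverse)
  define A where "A i = {t \<in> {0..1::real}. cmod (cis (2*pi*t) - r i) \<le> eps}" for i
  have A_sets: "A i \<in> sets lborel" for i
    unfolding A_def by (intro sublevel_Icc_in_sets_lborel continuous_intros)
  have "?S \<subseteq> (\<Union>i<d. A i)"
  proof
    fix t assume t: "t \<in> ?S"
    show "t \<in> (\<Union>i<d. A i)"
    proof (rule ccontr)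
      assume "t \<notin> (\<Union>i<d. A i)"
      then have "eps ^ d < (\<Prod>i<d. cmod (cis (2*pi*t) - r i))"
        using t \<open>eps \<ge> 0\<close> assms(3) by (intro power_less_prod) (auto simp: A_def not_le)
      then show False
        using t assms(1) by (simp add: eps_power pos_divide_less_eq mult.commute)
    qed
  qed
  moreover have "?S \<in> sets lborel"
    by (intro sublevel_Icc_in_sets_lborel continuous_intros)
  moreover have "(\<Union>i<d. A i) \<in> fmeasurable lborel"
  proof (rule fmeasurableI2)
    show "{0..1::real} \<in> fmeasurable lborel" by (intro fmeasurable_compact compact_Icc)
    show "(\<Union>i<d. A i) \<subseteq> {0..1}" unfolding A_def by blast
    show "(\<Union>i<d. A i) \<in> sets lborel" using A_sets by blast
  qed
  ultimately have "measure lborel ?S \<le> measure lborel (\<Union>i<d. A i)"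
    by (rule measure_mono_fmeasurable)
  also have "\<dots> \<le> (\<Sum>i<d. measure lborel (A i))"
    using A_sets by (intro measure_UNION_le) auto
  also have "\<dots> \<le> (\<Sum>i<d. 2 * eps)"
    unfolding A_def using \<open>eps \<ge> 0\<close> by (intro sum_mono measure_circle_near_point_le)
  finally show ?thesis by (simp add: eps_def)
qed

lemma spec_density_width_0:
  assumes "laurent_poly c" "c \<noteq> (\<lambda>_. 0)" "wd c = 0"
  shows "spec_density c l = (if cmod (lead c) \<le> l then 1 else 0)"
proof -
  obtain r where
    "\<And>x. cmod (leval c (cis x)) = cmod (lead c) * (\<Prod>i<wd c. cmod (cis x - r i))"
    using norm_leval_cis_eq_prod[OF assms(1,2)] by blast
  then have "{t \<in> {0..1::real}. cmod (leval c (cis (2 * pi * t))) \<le> l}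
      = (if cmod (lead c) \<le> l then {0..1} else {})"
    using assms(3) by auto
  then show ?thesis by (simp add: spec_density_def)
qed

lemma spec_density_le:
  assumes "laurent_poly c" "c \<noteq> (\<lambda>_. 0)" "wd c \<noteq> 0" "0 \<le> l"
  shows "spec_density c l \<le> 2 * real (wd c) * (l / cmod (lead c)) powr (1 / real (wd c))"
proof -
  obtain r where r:
    "\<And>x. cmod (leval c (cis x)) = cmod (lead c) * (\<Prod>i<wd c. cmod (cis x - r i))"
    using norm_leval_cis_eq_prod[OF assms(1,2)] by blast
  have "spec_density c l = measure lborel
      {t \<in> {0..1::real}. cmod (lead c) * (\<Prod>i<wd c. cmod (cis (2*pi*t) - r i)) \<le> l}"
    by (simp add: spec_density_def r)
  also have "\<dots> \<le> 2 * real (wd c) * (l / cmod (lead c)) powr (1 / real (wd c))"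
    using lead_nonzero[OF assms(1,2)] assms(3,4) by (intro measure_circle_sublevel_prod_le) auto
  finally show ?thesis .
qed

lemma two_le_8_sqrt_3_div_sqrt_47: "2 \<le> 8 * sqrt 3 / sqrt 47"
proof -
  have "sqrt 47 \<le> sqrt (4\<^sup>2 * 3)" by simp
  then have "sqrt 47 \<le> 4 * sqrt 3" by (simp only: real_sqrt_mult real_sqrt_abs)
  then show ?thesis by (simp add: le_divide_eq)
qed

theorem lemma2p3:
  fixes c :: "int \<Rightarrow> complex"
  assumes "laurent_poly c" and "c \<noteq> (\<lambda>_. 0)"
  shows "(wd c = 0 \<longrightarrow>
            (\<forall>l::real. 0 \<le> l \<and> l < cmod (lead c) \<longrightarrow> spec_density c l = 0) \<and>
            (\<forall>l::real. l \<ge> cmod (lead c) \<longrightarrow> spec_density c l = 1))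
       \<and> (wd c \<ge> 1 \<longrightarrow>
            (\<forall>l::real. 0 \<le> l \<longrightarrow>
               spec_density c l \<le> 8 * sqrt 3 / sqrt 47 * real (wd c)
                 * (l / cmod (lead c)) powr (1 / real (wd c))))"
proof (intro conjI impI allI)
  fix l :: real
  assume "wd c = 0"
  then show "0 \<le> l \<and> l < cmod (lead c) \<Longrightarrow> spec_density c l = 0"
    and "l \<ge> cmod (lead c) \<Longrightarrow> spec_density c l = 1"
    using spec_density_width_0[OF assms] by auto
next
  fix l :: real
  assume "wd c \<ge> 1" "0 \<le> l"
  then have "spec_density c l \<le> 2 * real (wd c) * (l / cmod (lead c)) powr (1 / real (wd c))"
    using spec_density_le[OF assms] by simp
  also have "\<dots> \<le> 8 * sqrt 3 / sqrt 47 * real (wd c) * (l / cmod (lead c)) powr (1 / real (wd c))"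
    using two_le_8_sqrt_3_div_sqrt_47 by (intro mult_right_mono) auto
  finally show "spec_density c l \<le> \<dots>" .
qed

end
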